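(* Let $n\ge 2$ and let $P$ be a partial $n$-Metric on a set $X$. Define $d:X\times X\to\mathbb{R}$ by $$d(x,y)=P(y,\langle x\rangle^{n-1})-P(\langle x\rangle^n)+P(x,\langle y\rangle^{n-1})-P(\langle y\rangle^n).$$ Then $d$ is a metric on $X$.
   Context: Notation: $\langle a\rangle^k$ denotes the $k$-tuple $(a,a,\dots,a)$, inserted into the argument list of a function. A partial $n$-Metric on $X$ is a function $P:X^n\to\mathbb{R}$ such that for all $x_1,\dots,x_n,a\in X$: (1) $P(\langle x_1\rangle^n)\le P(\langle x_1\rangle^{n-1},x_2)$; (2) $P(x_1,\dots,x_n)=P(x_{\pi(1)},\dots,x_{\pi(n)})$ for every permutation $\pi$ of $\{1,\dots,n\}$; (3) $P(\langle x_1\rangle^{n-1},x_2)=P(\langle x_1\rangle^n)$ and $P(\langle x_2\rangle^{n-1},x_1)=P(\langle x_2\rangle^n)$ if and only if $x_1=x_2$; (4) $P(x_1,\dots,x_n)\le P(x_1,\dots,x_{n-1},a)+P(\langle a\rangle^{n-1},x_n)-P(\langle a\rangle^n)$. *)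

theory Defs
  imports "HOL-Analysis.Analysis" "HOL-Library.Multiset"
begin

text \<open>A point of X^n is represented as a list of length n. The tuple
  (<a>^k, b1, ..., bm) is written  replicate k a @ [b1,...,bm].\<close>

definition partial_n_metric :: "nat \<Rightarrow> ('a list \<Rightarrow> real) \<Rightarrow> bool" where
  "partial_n_metric n P \<longleftrightarrow>
     (\<forall>x1 x2. P (replicate n x1) \<le> P (replicate (n-1) x1 @ [x2])) \<and>
     (\<forall>xs ys. length xs = n \<longrightarrow> mset ys = mset xs \<longrightarrow> P ys = P xs) \<and>
     (\<forall>x1 x2. (P (replicate (n-1) x1 @ [x2]) = P (replicate n x1) \<and>
               P (replicate (n-1) x2 @ [x1]) = P (replicate n x2)) \<longleftrightarrow> x1 = x2) \<and>
     (\<forall>xs a. length xs = n \<longrightarrow>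
        P xs \<le> P (butlast xs @ [a]) + P (replicate (n-1) a @ [last xs]) - P (replicate n a))"

definition pm_dist :: "nat \<Rightarrow> ('a list \<Rightarrow> real) \<Rightarrow> 'a \<Rightarrow> 'a \<Rightarrow> real" where
  "pm_dist n P x y =
     P (y # replicate (n-1) x) - P (replicate n x) + P (x # replicate (n-1) y) - P (replicate n y)"

end

theory Submission
  imports Defs
begin

text \<open>The quantity e(x,y) = P(<x>^(n-1), y) - P(<x>^n) is a quasi-metric: it is nonnegative
  by axiom (1), satisfies the triangle inequality by axiom (4) applied to (<x>^(n-1), z) with
  a = y, and e(x,y) = e(y,x) = 0 forces x = y by axiom (3). The distance d is the
  symmetrisation e(x,y) + e(y,x), once axiom (2) moves the odd argument to the end.\<close>

lemma Metric_space_symmetrize: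
  fixes e :: "'a \<Rightarrow> 'a \<Rightarrow> real"
  assumes nonneg: "\<And>x y. 0 \<le> e x y"
    and triangle: "\<And>x y z. e x z \<le> e x y + e y z"
    and separation: "\<And>x y. e x y = 0 \<and> e y x = 0 \<longleftrightarrow> x = y"
  shows "Metric_space UNIV (\<lambda>x y. e x y + e y x)"
proof
  fix x y z
  show "0 \<le> e x y + e y x" using nonneg[of x y] nonneg[of y x] by simp
  show "e x y + e y x = e y x + e x y" by simp
  show "e x y + e y x = 0 \<longleftrightarrow> x = y"
    using nonneg[of x y] nonneg[of y x] separation[of x y] by auto
  show "e x z + e z x \<le> (e x y + e y x) + (e y z + e z y)"
    using triangle[where x=x and y=y and z=z] triangle[where x=z and y=y and z=x] by simp
qed

definition pm_excess :: "nat \<Rightarrow> ('a list \<Rightarrow> real) \<Rightarrow> 'a \<Rightarrow> 'a \<Rightarrow> real" where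
  "pm_excess n P x y = P (replicate (n-1) x @ [y]) - P (replicate n x)"

context
  fixes n :: nat and P :: "'a list \<Rightarrow> real"
  assumes partial: "partial_n_metric n P"
begin

lemma pm_excess_nonneg: "0 \<le> pm_excess n P x y"
proof -
  have "P (replicate n x) \<le> P (replicate (n-1) x @ [y])"
    using partial unfolding partial_n_metric_def by blast
  then show ?thesis unfolding pm_excess_def by simp
qed

lemma pm_excess_separation: "pm_excess n P x y = 0 \<and> pm_excess n P y x = 0 \<longleftrightarrow> x = y"
proof -
  have "P (replicate (n-1) x @ [y]) = P (replicate n x) \<and>
      P (replicate (n-1) y @ [x]) = P (replicate n y) \<longleftrightarrow> x = y"
    using partial unfolding partial_n_metric_def by blast
  then show ?thesis unfolding pm_excess_def by simp
qed

lemma pm_excess_triangle: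
  assumes "n \<ge> 1"
  shows "pm_excess n P x z \<le> pm_excess n P x y + pm_excess n P y z"
proof -
  have "length (replicate (n-1) x @ [z]) = n" using assms by simp
  with partial have "P (replicate (n-1) x @ [z])
      \<le> P (replicate (n-1) x @ [y]) + P (replicate (n-1) y @ [z]) - P (replicate n y)"
    unfolding partial_n_metric_def by (metis butlast_snoc last_snoc)
  then show ?thesis unfolding pm_excess_def by simp
qed

lemma pm_dist_eq_pm_excess:
  assumes "n \<ge> 1"
  shows "pm_dist n P x y = pm_excess n P x y + pm_excess n P y x"
proof -
  have "P (b # replicate (n-1) a) = P (replicate (n-1) a @ [b])" for a b
  proof -
    have "length (replicate (n-1) a @ [b]) = n" using assms by simp
    moreover have "mset (b # replicate (n-1) a) = mset (replicate (n-1) a @ [b])" by simp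
    ultimately show ?thesis using partial unfolding partial_n_metric_def by blast
  qed
  then show ?thesis unfolding pm_dist_def pm_excess_def by simp
qed

end

theorem theorem2p13:
  fixes n :: nat and P :: "'a list \<Rightarrow> real"
  assumes "n \<ge> 2" and "partial_n_metric n P"
  shows "Metric_space UNIV (pm_dist n P)"
proof -
  have "n \<ge> 1" using assms(1) by simp
  have "Metric_space UNIV (\<lambda>x y. pm_excess n P x y + pm_excess n P y x)"
    by (rule Metric_space_symmetrize[OF pm_excess_nonneg pm_excess_triangle pm_excess_separation])
      (use assms(2) \<open>n \<ge> 1\<close> in auto)
  moreover have "pm_dist n P = (\<lambda>x y. pm_excess n P x y + pm_excess n P y x)"
    using pm_dist_eq_pm_excess[OF assms(2) \<open>n \<ge> 1\<close>] by blast
  ultimately show ?thesis by simp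
qed

end
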